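(* Let $G$ be a free group and $f:G\to G$ an endomorphism such that for every finitely generated free group $H$ and every homomorphism $g:H\to G$, the composition $f\circ g$ is conjugate to $g$ (i.e. there is $c\in G$ with $f(g(h))=c^{-1}g(h)c$ for all $h\in H$). Then $f$ is conjugate to $\mathrm{id}_G$, i.e. there is $c\in G$ with $f(x)=c^{-1}xc$ for all $x\in G$. *)

theory Defs
  imports "HOL-Algebra.Generated_Groups"
begin

text \<open>Words over an alphabet X: letters (x, True) stand for x, (x, False) for x inverse.\<close>

fun word_eval :: "('a, 'b) monoid_scheme \<Rightarrow> ('a \<times> bool) list \<Rightarrow> 'a" where
  "word_eval G [] = \<one>\<^bsub>G\<^esub>"
| "word_eval G ((x, b) # w) =
     (if b then x else inv\<^bsub>G\<^esub> x) \<otimes>\<^bsub>G\<^esub> word_eval G w"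

fun reduced_word :: "('a \<times> bool) list \<Rightarrow> bool" where
  "reduced_word [] = True"
| "reduced_word [_] = True"
| "reduced_word ((x, b) # (y, c) # w) =
     (\<not> (x = y \<and> b \<noteq> c) \<and> reduced_word ((y, c) # w))"

definition free_basis :: "('a, 'b) monoid_scheme \<Rightarrow> 'a set \<Rightarrow> bool" where
  "free_basis G X \<longleftrightarrow>
     X \<subseteq> carrier G \<and> generate G X = carrier G \<and>
     (\<forall>w. set (map fst w) \<subseteq> X \<and> reduced_word w \<and> w \<noteq> [] \<longrightarrow> word_eval G w \<noteq> \<one>\<^bsub>G\<^esub>)"

definition free_group :: "('a, 'b) monoid_scheme \<Rightarrow> bool" where
  "free_group G \<longleftrightarrow> group G \<and> (\<exists>X. free_basis G X)"

definition fg_free_group :: "('a, 'b) monoid_scheme \<Rightarrow> bool" where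
  "fg_free_group G \<longleftrightarrow> group G \<and> (\<exists>X. finite X \<and> free_basis G X)"

end

theory Submission
  imports Defs "HOL-Library.Countable_Set"
begin

(* Applying the hypothesis to isomorphic copies (with carrier in nat) of the subgroups generated
   by finite subsets B of a free basis X shows that f agrees on each such B with conjugation by
   some c_B.  If X contains two distinct letters x and y, the conjugators for {x, y} and for
   {x, y, z} differ by an element commuting with both x and y, which must be trivial by
   uniqueness of reduced words.  So one conjugator works on all of X, hence on the group X
   generates. *)

section \<open>Free reduction of words\<close>

definition cancels :: "'a \<times> bool \<Rightarrow> 'a \<times> bool \<Rightarrow> bool" where
  "cancels p q \<longleftrightarrow> fst p = fst q \<and> snd p \<noteq> snd q"

definition letter_inv :: "'a \<times> bool \<Rightarrow> 'a \<times> bool" where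
  "letter_inv p = (fst p, \<not> snd p)"

definition word_inv :: "('a \<times> bool) list \<Rightarrow> ('a \<times> bool) list" where
  "word_inv w = rev (map letter_inv w)"

definition cons_reduce :: "'a \<times> bool \<Rightarrow> ('a \<times> bool) list \<Rightarrow> ('a \<times> bool) list" where
  "cons_reduce a w = (case w of [] \<Rightarrow> [a] | b # w' \<Rightarrow> if cancels a b then w' else a # w)"

definition reduce_word :: "('a \<times> bool) list \<Rightarrow> ('a \<times> bool) list" where
  "reduce_word w = foldr cons_reduce w []"

lemma reduced_word_iff_successively: "reduced_word w \<longleftrightarrow> successively (\<lambda>p q. \<not> cancels p q) w"
  by (induction w rule: reduced_word.induct) (auto simp: cancels_def)

lemma reduced_word_Cons: "reduced_word (p # w) \<Longrightarrow> reduced_word w"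
  by (cases p; cases w) auto

lemma reduced_word_inv: "reduced_word w \<Longrightarrow> reduced_word (word_inv w)"
  unfolding reduced_word_iff_successively word_inv_def successively_rev successively_map
  by (simp add: cancels_def letter_inv_def eq_commute)

lemma fst_set_word_inv [simp]: "fst ` set (word_inv w) = fst ` set w"
  by (force simp: word_inv_def letter_inv_def)

lemma set_cons_reduce: "set (cons_reduce a w) \<subseteq> insert a (set w)"
  by (auto simp: cons_reduce_def split: list.split)

lemma reduced_word_cons_reduce: "reduced_word w \<Longrightarrow> reduced_word (cons_reduce a w)"
  by (auto simp: cons_reduce_def reduced_word_iff_successively successively_Cons split: list.split)

lemma set_reduce_word: "set (reduce_word w) \<subseteq> set w"
  unfolding reduce_word_def by (induction w) (use set_cons_reduce in fastforce)+

lemma reduced_word_reduce_word: "reduced_word (reduce_word w)"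
  unfolding reduce_word_def by (induction w) (simp_all add: reduced_word_cons_reduce)

lemma reduced_word_map_inj:
  assumes "inj_on h (fst ` set w)"
  shows "reduced_word (map (apfst h) w) \<longleftrightarrow> reduced_word w"
proof -
  have "cancels (apfst h p) (apfst h q) \<longleftrightarrow> cancels p q" if "p \<in> set w" "q \<in> set w" for p q
    using inj_on_eq_iff[OF assms] that by (auto simp: cancels_def)
  then show ?thesis
    unfolding reduced_word_iff_successively successively_map
    by (intro successively_cong) auto
qed

(* The defining equation of word_eval only fires on letters written as explicit pairs. *)
lemma word_eval_Cons [simp]:
  "word_eval G (p # w) = (if snd p then fst p else inv\<^bsub>G\<^esub> fst p) \<otimes>\<^bsub>G\<^esub> word_eval G w"
  by (cases p) simp

declare word_eval.simps(2) [simp del]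

context group
begin

lemma word_eval_closed [simp]: "fst ` set w \<subseteq> carrier G \<Longrightarrow> word_eval G w \<in> carrier G"
  by (induction w) auto

lemma word_eval_append:
  "fst ` set u \<subseteq> carrier G \<Longrightarrow> fst ` set v \<subseteq> carrier G \<Longrightarrow>
    word_eval G (u @ v) = word_eval G u \<otimes> word_eval G v"
  by (induction u) (auto simp: m_assoc)

lemma word_eval_snoc:
  "fst ` set w \<subseteq> carrier G \<Longrightarrow> fst p \<in> carrier G \<Longrightarrow>
    word_eval G (w @ [p]) = word_eval G w \<otimes> (if snd p then fst p else inv fst p)"
  by (simp add: word_eval_append)

lemma word_eval_word_inv:
  "fst ` set w \<subseteq> carrier G \<Longrightarrow> word_eval G (word_inv w) = inv (word_eval G w)"
proof (induction w)
  case (Cons p w)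
  then have "word_eval G (word_inv (p # w)) =
      inv (word_eval G w) \<otimes> inv (if snd p then fst p else inv fst p)"
    by (simp add: word_inv_def letter_inv_def word_eval_snoc image_image)
  then show ?case
    using Cons.prems by (simp add: inv_mult_group)
qed (simp add: word_inv_def)

lemma word_eval_cons_reduce:
  "fst a \<in> carrier G \<Longrightarrow> fst ` set w \<subseteq> carrier G \<Longrightarrow>
    word_eval G (cons_reduce a w) = word_eval G (a # w)"
  by (auto simp: cons_reduce_def cancels_def m_assoc[symmetric] split: list.split)

lemma word_eval_reduce_word: "fst ` set w \<subseteq> carrier G \<Longrightarrow> word_eval G (reduce_word w) = word_eval G w"
proof (induction w)
  case (Cons a w)
  have "fst ` set (reduce_word w) \<subseteq> carrier G"
    using set_reduce_word Cons.prems by fastforce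
  then show ?case
    using Cons by (simp add: reduce_word_def word_eval_cons_reduce)
qed (simp add: reduce_word_def)

lemma generate_word_eval:
  assumes "B \<subseteq> carrier G" "g \<in> generate G B"
  obtains w where "fst ` set w \<subseteq> B" "word_eval G w = g"
  using assms(2)
proof (induction arbitrary: thesis rule: generate.induct)
  case one
  show ?case
    using one.prems[of "[]"] by simp
next
  case (incl h)
  show ?case
    using incl.prems(1)[of "[(h, True)]"] incl.hyps assms(1) by auto
next
  case (inv h)
  show ?case
    using inv.prems(1)[of "[(h, False)]"] inv.hyps assms(1) by auto
next
  case (eng h1 h2)
  obtain w1 w2 where "fst ` set w1 \<subseteq> B" "word_eval G w1 = h1" "fst ` set w2 \<subseteq> B" "word_eval G w2 = h2"
    using eng.IH by metis
  then show ?case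
    using eng.prems[of "w1 @ w2"] assms(1) by (auto simp: word_eval_append)
qed

lemma generate_reduced_word:
  assumes "B \<subseteq> carrier G" "g \<in> generate G B"
  obtains w where "fst ` set w \<subseteq> B" "reduced_word w" "word_eval G w = g"
proof -
  obtain w where w: "fst ` set w \<subseteq> B" "word_eval G w = g"
    using generate_word_eval[OF assms] .
  have "fst ` set (reduce_word w) \<subseteq> B"
    using w(1) set_reduce_word by fastforce
  moreover have "word_eval G (reduce_word w) = g"
    using w assms(1) by (simp add: word_eval_reduce_word)
  ultimately show thesis
    using that reduced_word_reduce_word by blast
qed

end

section \<open>Uniqueness of reduced words over a free basis\<close>

lemma reduced_word_append:
  "reduced_word (u @ v) \<longleftrightarrow>
    reduced_word u \<and> reduced_word v \<and> (u = [] \<or> v = [] \<or> \<not> cancels (last u) (hd v))"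
  by (simp add: reduced_word_iff_successively successively_append_iff)

context group
begin

lemma free_basis_reduced_word_eq_one:
  "free_basis G X \<Longrightarrow> fst ` set w \<subseteq> X \<Longrightarrow> reduced_word w \<Longrightarrow> word_eval G w = \<one> \<Longrightarrow> w = []"
  unfolding free_basis_def set_map by blast

lemma reduced_words_same_hd:
  assumes fb: "free_basis G X"
    and u: "fst ` set (a # u) \<subseteq> X" "reduced_word (a # u)"
    and v: "fst ` set (b # v) \<subseteq> X" "reduced_word (b # v)"
    and eq: "word_eval G (a # u) = word_eval G (b # v)"
  shows "a = b"
proof (rule ccontr)
  assume "a \<noteq> b"
  have "X \<subseteq> carrier G"
    using fb by (simp add: free_basis_def)
  then have carr: "fst ` set (a # u) \<subseteq> carrier G" "fst ` set (b # v) \<subseteq> carrier G"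
    using u(1) v(1) by auto
  define z where "z = word_inv (b # v) @ a # u"
  have "word_eval G z = inv (word_eval G (b # v)) \<otimes> word_eval G (a # u)"
    unfolding z_def using carr by (simp add: word_eval_append word_eval_word_inv)
  also have "\<dots> = \<one>"
    using eq carr by simp
  finally have "word_eval G z = \<one>" .
  moreover have "reduced_word z"
  proof -
    have "last (word_inv (b # v)) = letter_inv b"
      by (simp add: word_inv_def last_rev)
    moreover have "\<not> cancels (letter_inv b) a"
      using \<open>a \<noteq> b\<close> by (auto simp: cancels_def letter_inv_def prod_eq_iff)
    ultimately show ?thesis
      using u(2) v(2) by (simp add: z_def reduced_word_append reduced_word_inv)
  qed
  moreover have "fst ` set z \<subseteq> X"
    using u(1) v(1) by (simp add: z_def image_Un)
  ultimately have "z = []"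
    using free_basis_reduced_word_eq_one[OF fb] by blast
  then show False
    by (simp add: z_def)
qed

lemma reduced_word_unique:
  assumes fb: "free_basis G X"
  shows "fst ` set u \<subseteq> X \<Longrightarrow> fst ` set v \<subseteq> X \<Longrightarrow> reduced_word u \<Longrightarrow> reduced_word v \<Longrightarrow>
    word_eval G u = word_eval G v \<Longrightarrow> u = v"
proof (induction u arbitrary: v)
  case Nil
  then show ?case
    using free_basis_reduced_word_eq_one[OF fb] by (metis word_eval.simps(1))
next
  case (Cons a u)
  show ?case
  proof (cases v)
    case Nil
    then show ?thesis
      using Cons.prems free_basis_reduced_word_eq_one[OF fb, of "a # u"] by simp
  next
    case v: (Cons b v')
    then have "a = b"
      using reduced_words_same_hd[OF fb] Cons.prems by blast
    have "X \<subseteq> carrier G"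
      using fb by (simp add: free_basis_def)
    then have "fst ` set (a # u) \<subseteq> carrier G" "fst ` set v \<subseteq> carrier G"
      using Cons.prems(1,2) by auto
    then have "word_eval G u = word_eval G v'"
      using Cons.prems(5) v \<open>a = b\<close> by (cases "snd b") auto
    then have "u = v'"
      using Cons.IH Cons.prems v by (auto dest: reduced_word_Cons)
    then show ?thesis
      using v \<open>a = b\<close> by simp
  qed
qed

lemma commuting_reduced_word_ends:
  assumes fb: "free_basis G X" and t: "t \<in> X"
    and w: "fst ` set w \<subseteq> X" "reduced_word w" "w \<noteq> []"
    and comm: "t \<otimes> word_eval G w = word_eval G w \<otimes> t"
  shows "hd w = (t, False) \<or> last w = (t, True)"
proof (rule ccontr)
  assume ends: "\<not> ?thesis"
  have XG: "X \<subseteq> carrier G"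
    using fb by (simp add: free_basis_def)
  then have carr: "t \<in> carrier G" "fst ` set w \<subseteq> carrier G"
    using t w by auto
  define z where "z = (t, True) # w @ [(t, False)]"
  have "word_eval G z = (t \<otimes> word_eval G w) \<otimes> inv t"
    using carr by (simp add: z_def word_eval_snoc m_assoc)
  also have "\<dots> = word_eval G w"
    using carr by (simp add: comm m_assoc)
  finally have "word_eval G z = word_eval G w" .
  moreover have "reduced_word z"
  proof -
    have "reduced_word (w @ [(t, False)])"
      using ends w(2,3) by (auto simp: reduced_word_append cancels_def prod_eq_iff)
    then show ?thesis
      using reduced_word_append[of "[(t, True)]" "w @ [(t, False)]"] ends w(3)
      by (auto simp: z_def cancels_def prod_eq_iff)
  qed
  moreover have "fst ` set z \<subseteq> X"
    using t w(1) by (simp add: z_def)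
  ultimately have "z = w"
    using reduced_word_unique[OF fb] w by blast
  then show False
    using arg_cong[OF \<open>z = w\<close>, of length] by (simp add: z_def)
qed

lemma reduced_word_not_commuting:
  assumes fb: "free_basis G X" and xy: "x \<in> X" "x \<noteq> y"
    and w: "fst ` set w \<subseteq> X" "reduced_word w" "w \<noteq> []"
    and ends: "hd w = (x, False)" "last w = (y, True)"
  shows "x \<otimes> word_eval G w \<noteq> word_eval G w \<otimes> x"
proof
  assume comm: "x \<otimes> word_eval G w = word_eval G w \<otimes> x"
  obtain w' where w': "w = (x, False) # w'"
    using w(3) ends(1) by (cases w) auto
  have "w' \<noteq> []"
    using w' ends xy(2) by auto
  have XG: "X \<subseteq> carrier G"
    using fb by (simp add: free_basis_def)
  then have carr: "x \<in> carrier G" "fst ` set w' \<subseteq> carrier G"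
    using xy w w' by auto
  define z where "z = w' @ [(x, False)]"
  have "word_eval G w' = x \<otimes> word_eval G w"
    using carr by (simp add: w' m_assoc[symmetric])
  then have "word_eval G z = x \<otimes> word_eval G w \<otimes> inv x"
    using carr by (simp add: z_def word_eval_snoc)
  also have "\<dots> = word_eval G w"
    using carr w(1) XG by (simp add: comm m_assoc)
  finally have "word_eval G z = word_eval G w" .
  moreover have "reduced_word z"
    using w(2) w' \<open>w' \<noteq> []\<close> ends(2) xy(2)
    by (auto simp: z_def reduced_word_append cancels_def dest: reduced_word_Cons)
  moreover have "fst ` set z \<subseteq> X"
    using w w' xy(1) by (auto simp: z_def)
  ultimately have "z = w"
    using reduced_word_unique[OF fb] w by blast
  then show False
    using ends(2) xy(2) last_snoc[of w' "(x, False)"] by (simp add: z_def)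
qed

theorem free_basis_centralizer_trivial:
  assumes fb: "free_basis G X" and xy: "x \<in> X" "y \<in> X" "x \<noteq> y"
    and e: "e \<in> carrier G" "x \<otimes> e = e \<otimes> x" "y \<otimes> e = e \<otimes> y"
  shows "e = \<one>"
proof (rule ccontr)
  assume "e \<noteq> \<one>"
  have "X \<subseteq> carrier G" "generate G X = carrier G"
    using fb by (auto simp: free_basis_def)
  then obtain w where w: "fst ` set w \<subseteq> X" "reduced_word w" "word_eval G w = e"
    using generate_reduced_word e(1) by metis
  with \<open>e \<noteq> \<one>\<close> have "w \<noteq> []"
    by auto
  have "hd w = (x, False) \<or> last w = (x, True)" "hd w = (y, False) \<or> last w = (y, True)"
    using commuting_reduced_word_ends[OF fb _ w(1,2) \<open>w \<noteq> []\<close>] xy e w(3) by auto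
  then consider "hd w = (x, False)" "last w = (y, True)" | "hd w = (y, False)" "last w = (x, True)"
    using xy(3) by auto
  then show False
  proof cases
    case 1
    then show False
      using reduced_word_not_commuting[OF fb xy(1,3) w(1,2) \<open>w \<noteq> []\<close>] e w(3) by simp
  next
    case 2
    then show False
      using reduced_word_not_commuting[OF fb xy(2) xy(3)[symmetric] w(1,2) \<open>w \<noteq> []\<close>] e w(3)
      by simp
  qed
qed

end

section \<open>Finitely generated subgroups as free groups on the naturals\<close>

lemma (in group) countable_generate:
  assumes "countable B" "B \<subseteq> carrier G"
  shows "countable (generate G B)"
proof -
  have "generate G B \<subseteq> word_eval G ` lists (B \<times> UNIV)"
  proof
    fix g assume "g \<in> generate G B"
    then obtain w where "fst ` set w \<subseteq> B" "word_eval G w = g"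
      using generate_word_eval assms(2) by metis
    then show "g \<in> word_eval G ` lists (B \<times> UNIV)"
      by (force simp: in_lists_conv_set)
  qed
  moreover have "countable (word_eval G ` lists (B \<times> (UNIV :: bool set)))"
    using assms(1) by (intro countable_image countable_lists countable_SIGMA) auto
  ultimately show ?thesis
    by (rule countable_subset)
qed

lemma (in group_hom) word_eval_hom:
  "fst ` set w \<subseteq> carrier G \<Longrightarrow> h (word_eval G w) = word_eval H (map (apfst h) w)"
  by (induction w) auto

lemma countable_subgroup_nat_copy:
  fixes G (structure)
  assumes "group G" "subgroup S G" "countable S"
  obtains H :: "nat monoid" and \<psi>
  where "group H" "\<psi> \<in> hom H G" "inj_on \<psi> (carrier H)" "\<psi> ` carrier H = S"
proof -
  interpret group G by fact
  define \<phi> where "\<phi> = to_nat_on S"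
  define \<psi> where "\<psi> = inv_into S \<phi>"
  have "inj_on \<phi> S"
    unfolding \<phi>_def using assms(3) by (rule inj_on_to_nat_on)
  then have \<psi>\<phi> [simp]: "\<psi> (\<phi> s) = s" if "s \<in> S" for s
    unfolding \<psi>_def using that by simp
  note S = subgroup.mem_carrier[OF assms(2)] subgroup.m_closed[OF assms(2)]
    subgroup.one_closed[OF assms(2)] subgroup.m_inv_closed[OF assms(2)]
  define H where "H = \<lparr>carrier = \<phi> ` S, mult = \<lambda>a b. \<phi> (\<psi> a \<otimes> \<psi> b), one = \<phi> \<one>\<rparr>"
  have "group H"
  proof (rule groupI)
    show "a \<otimes>\<^bsub>H\<^esub> b \<in> carrier H" if "a \<in> carrier H" "b \<in> carrier H" for a b
      using that S by (auto simp: H_def)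
    show "\<one>\<^bsub>H\<^esub> \<in> carrier H"
      using S by (simp add: H_def)
    show "a \<otimes>\<^bsub>H\<^esub> b \<otimes>\<^bsub>H\<^esub> c = a \<otimes>\<^bsub>H\<^esub> (b \<otimes>\<^bsub>H\<^esub> c)"
      if "a \<in> carrier H" "b \<in> carrier H" "c \<in> carrier H" for a b c
      using that S by (auto simp: H_def m_assoc)
    show "\<one>\<^bsub>H\<^esub> \<otimes>\<^bsub>H\<^esub> a = a" if "a \<in> carrier H" for a
      using that S by (auto simp: H_def)
  next
    fix a assume "a \<in> carrier H"
    then obtain s where "s \<in> S" "a = \<phi> s"
      by (auto simp: H_def)
    then show "\<exists>b\<in>carrier H. b \<otimes>\<^bsub>H\<^esub> a = \<one>\<^bsub>H\<^esub>"
      using S by (intro bexI[of _ "\<phi> (inv s)"]) (auto simp: H_def)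
  qed
  moreover have "\<psi> \<in> hom H G"
    using S by (intro homI) (auto simp: H_def)
  moreover have "inj_on \<psi> (carrier H)"
    by (intro inj_onI) (auto simp: H_def)
  moreover have "\<psi> ` carrier H = S"
    by (force simp: H_def)
  ultimately show thesis
    using that by blast
qed

lemma free_basis_of_inj_hom:
  assumes "group H" "group G" "\<psi> \<in> hom H G" "inj_on \<psi> (carrier H)" "free_basis G X"
    and Y: "Y \<subseteq> carrier H" "\<psi> ` Y \<subseteq> X" "\<psi> ` carrier H = generate G (\<psi> ` Y)"
  shows "free_basis H Y"
proof -
  have hom: "group_hom H G \<psi>"
    using assms(1-3) by (simp add: group_hom_def group_hom_axioms_def)
  have "\<psi> ` generate H Y = \<psi> ` carrier H"
    using group_hom.generate_img[OF hom Y(1)] Y(3) by simp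
  moreover have "generate H Y \<subseteq> carrier H"
    using group.generate_in_carrier[OF assms(1) Y(1)] by blast
  ultimately have "generate H Y = carrier H"
    using inj_on_image_eq_iff[OF assms(4)] by blast
  moreover have "word_eval H w \<noteq> \<one>\<^bsub>H\<^esub>"
    if w: "fst ` set w \<subseteq> Y" "reduced_word w" "w \<noteq> []" for w
  proof
    assume one: "word_eval H w = \<one>\<^bsub>H\<^esub>"
    have "word_eval G (map (apfst \<psi>) w) = \<psi> (word_eval H w)"
      using group_hom.word_eval_hom[OF hom, of w] w(1) Y(1) by simp
    also have "\<dots> = \<one>\<^bsub>G\<^esub>"
      using one group_hom.hom_one[OF hom] by simp
    finally have "word_eval G (map (apfst \<psi>) w) = \<one>\<^bsub>G\<^esub>" .
    moreover have "inj_on \<psi> (fst ` set w)"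
      using inj_on_subset[OF assms(4)] w(1) Y(1) by blast
    then have "reduced_word (map (apfst \<psi>) w)"
      using reduced_word_map_inj w(2) by blast
    moreover have "fst ` set (map (apfst \<psi>) w) \<subseteq> X"
      using w(1) Y(2) by force
    ultimately have "map (apfst \<psi>) w = []"
      using group.free_basis_reduced_word_eq_one[OF assms(2,5)] by blast
    with w(3) show False
      by simp
  qed
  ultimately show ?thesis
    using Y(1) by (simp add: free_basis_def)
qed

lemma finite_free_basis_subset_fg_free_image:
  fixes G (structure)
  assumes "group G" "free_basis G X" "B \<subseteq> X" "finite B"
  obtains H :: "nat monoid" and g where "fg_free_group H" "g \<in> hom H G" "B \<subseteq> g ` carrier H"
proof -
  interpret group G by fact
  have BG: "B \<subseteq> carrier G"
    using assms(2,3) by (auto simp: free_basis_def)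
  obtain H :: "nat monoid" and \<psi> where H: "group H" "\<psi> \<in> hom H G" "inj_on \<psi> (carrier H)"
    "\<psi> ` carrier H = generate G B"
    using countable_subgroup_nat_copy[OF assms(1) generate_is_subgroup[OF BG]
        countable_generate[OF countable_finite[OF assms(4)] BG]] .
  have BH: "B \<subseteq> \<psi> ` carrier H"
    using H(4) generate.incl[of _ B G] by blast
  define Y where "Y = carrier H \<inter> \<psi> -` B"
  have "\<psi> ` Y = B"
    using BH unfolding Y_def by blast
  have "finite Y"
    using finite_imageD[of \<psi> Y] inj_on_subset[OF H(3)] assms(4) \<open>\<psi> ` Y = B\<close>
    by (auto simp: Y_def)
  moreover have "free_basis H Y"
    using free_basis_of_inj_hom[OF H(1) assms(1) H(2,3) assms(2)] H(4) \<open>\<psi> ` Y = B\<close> assms(3)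
    by (simp add: Y_def)
  ultimately have "fg_free_group H"
    using H(1) by (auto simp: fg_free_group_def)
  then show thesis
    using that H(2) BH by blast
qed

section \<open>Conjugation\<close>

lemma hom_eq_on_generate:
  assumes "group G" "group K" "h \<in> hom G K" "k \<in> hom G K" "A \<subseteq> carrier G"
    and "\<And>a. a \<in> A \<Longrightarrow> h a = k a" and "x \<in> generate G A"
  shows "h x = k x"
proof -
  interpret h: group_hom G K h
    using assms(1-3) by (simp add: group_hom_def group_hom_axioms_def)
  interpret k: group_hom G K k
    using assms(1,2,4) by (simp add: group_hom_def group_hom_axioms_def)
  show ?thesis
    using assms(7)
  proof (induction rule: generate.induct)
    case (inv a)
    then show ?case
      using assms(5,6) by auto
  next
    case (eng a b)
    then show ?case
      using h.G.generate_in_carrier[OF assms(5)] by simp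
  qed (use assms(6) in auto)
qed

context group
begin

lemma conj_hom:
  assumes "c \<in> carrier G"
  shows "(\<lambda>x. inv c \<otimes> x \<otimes> c) \<in> hom G G"
proof (rule homI)
  show "inv c \<otimes> x \<otimes> c \<in> carrier G" if "x \<in> carrier G" for x
    using assms that by simp
  show "inv c \<otimes> (x \<otimes> y) \<otimes> c = (inv c \<otimes> x \<otimes> c) \<otimes> (inv c \<otimes> y \<otimes> c)"
    if "x \<in> carrier G" "y \<in> carrier G" for x y
    using assms that by (simp add: m_assoc) (simp add: m_assoc[symmetric])
qed

lemma conjugators_commute:
  assumes "a \<in> carrier G" "b \<in> carrier G" "x \<in> carrier G" "inv a \<otimes> x \<otimes> a = inv b \<otimes> x \<otimes> b"
  shows "x \<otimes> (b \<otimes> inv a) = (b \<otimes> inv a) \<otimes> x"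
proof -
  have "(b \<otimes> inv a) \<otimes> x = b \<otimes> (inv a \<otimes> x \<otimes> a) \<otimes> inv a"
    using assms(1-3) by (simp add: m_assoc)
  also have "\<dots> = x \<otimes> (b \<otimes> inv a)"
    using assms by (simp add: m_assoc[symmetric])
  finally show ?thesis
    by simp
qed

lemma free_basis_uniform_conjugator:
  assumes fb: "free_basis G X"
    and conj: "\<And>B. finite B \<Longrightarrow> B \<subseteq> X \<Longrightarrow> \<exists>c\<in>carrier G. \<forall>s\<in>B. f s = inv c \<otimes> s \<otimes> c"
  shows "\<exists>c\<in>carrier G. \<forall>s\<in>X. f s = inv c \<otimes> s \<otimes> c"
proof (cases "\<exists>x\<in>X. \<exists>y\<in>X. x \<noteq> y")
  case False
  then have "X = {} \<or> (\<exists>x. X = {x})"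
    by blast
  then show ?thesis
    using conj[of X] by auto
next
  case True
  then obtain x y where xy: "x \<in> X" "y \<in> X" "x \<noteq> y"
    by blast
  have XG: "X \<subseteq> carrier G"
    using fb by (simp add: free_basis_def)
  obtain c where c: "c \<in> carrier G" "\<forall>s\<in>{x, y}. f s = inv c \<otimes> s \<otimes> c"
    using conj[of "{x, y}"] xy by auto
  have "f z = inv c \<otimes> z \<otimes> c" if z: "z \<in> X" for z
  proof -
    obtain d where d: "d \<in> carrier G" "\<forall>s\<in>{x, y, z}. f s = inv d \<otimes> s \<otimes> d"
      using conj[of "{x, y, z}"] xy z by auto
    have "x \<otimes> (d \<otimes> inv c) = (d \<otimes> inv c) \<otimes> x" "y \<otimes> (d \<otimes> inv c) = (d \<otimes> inv c) \<otimes> y"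
      using conjugators_commute[OF c(1) d(1)] c(2) d(2) xy(1,2) XG by auto
    then have "d \<otimes> inv c = \<one>"
      using free_basis_centralizer_trivial[OF fb xy] c(1) d(1) by simp
    then have "d = c"
      using inv_equality[OF _ inv_closed[OF c(1)] d(1)] c(1) by simp
    then show ?thesis
      using d(2) by simp
  qed
  then show ?thesis
    using c(1) by blast
qed

end

theorem lemma5p5:
  fixes G :: "('a, 'b) monoid_scheme" and f :: "'a \<Rightarrow> 'a"
  assumes "free_group G"
    and "f \<in> hom G G"
    and "\<And>(H :: nat monoid) g. fg_free_group H \<Longrightarrow> g \<in> hom H G \<Longrightarrow>
           \<exists>c\<in>carrier G. \<forall>h\<in>carrier H. f (g h) = inv\<^bsub>G\<^esub> c \<otimes>\<^bsub>G\<^esub> g h \<otimes>\<^bsub>G\<^esub> c"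
  shows "\<exists>c\<in>carrier G. \<forall>x\<in>carrier G. f x = inv\<^bsub>G\<^esub> c \<otimes>\<^bsub>G\<^esub> x \<otimes>\<^bsub>G\<^esub> c"
proof -
  obtain X where G: "group G" and fb: "free_basis G X"
    using assms(1) by (auto simp: free_group_def)
  have "\<exists>c\<in>carrier G. \<forall>s\<in>B. f s = inv\<^bsub>G\<^esub> c \<otimes>\<^bsub>G\<^esub> s \<otimes>\<^bsub>G\<^esub> c"
    if B: "finite B" "B \<subseteq> X" for B
  proof -
    obtain H :: "nat monoid" and g where "fg_free_group H" "g \<in> hom H G" "B \<subseteq> g ` carrier H"
      using finite_free_basis_subset_fg_free_image[OF G fb B(2,1)] .
    then show ?thesis
      using assms(3) by blast
  qed
  then obtain c where c: "c \<in> carrier G" "\<forall>s\<in>X. f s = inv\<^bsub>G\<^esub> c \<otimes>\<^bsub>G\<^esub> s \<otimes>\<^bsub>G\<^esub> c"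
    using group.free_basis_uniform_conjugator[OF G fb] by blast
  have "f x = inv\<^bsub>G\<^esub> c \<otimes>\<^bsub>G\<^esub> x \<otimes>\<^bsub>G\<^esub> c" if "x \<in> carrier G" for x
    using hom_eq_on_generate[OF G G assms(2) group.conj_hom[OF G c(1)], of X x] fb c(2) that
    by (auto simp: free_basis_def)
  then show ?thesis
    using c(1) by blast
qed

end
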